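(* Let $F$ be any field and let $n,p$ be positive integers with $p>1$, $n\ge p$ and $p\mid n$. Then there exists an $(n,p)$ block invertible square matrix over $F$; that is, there exists an invertible $n\times n$ matrix $M$ over $F$ such that, when $M$ is partitioned into $(n/p)^2$ contiguous $p\times p$ blocks $B_{i,j}$ ($1\le i,j\le n/p$), every block $B_{i,j}$ is an invertible $p\times p$ matrix.
   Context: For positive integers $a,b,p$ with $p\mid a$ and $p\mid b$, an $a\times b$ matrix (with $a$ rows and $b$ columns) over $F$ is partitioned into $p\times p$ blocks $B_{i,j}$, where $B_{i,j}$ is the submatrix formed by rows $(i-1)p+1,\dots,ip$ and columns $(j-1)p+1,\dots,jp$. Such a matrix is called block invertible (with block size $p$) if every block $B_{i,j}$ is invertible. An $n\times n$ matrix is an $(n,p)$ block invertible square matrix if it is block invertible with block size $p$ and is itself invertible. *)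

theory Defs
  imports "Jordan_Normal_Form.Matrix"
begin

text \<open>The (i,j) p x p block of a matrix (0-based block indices):
  rows i*p .. i*p+p-1 and columns j*p .. j*p+p-1.\<close>
definition block :: "'a mat \<Rightarrow> nat \<Rightarrow> nat \<Rightarrow> nat \<Rightarrow> 'a mat" where
  "block M p i j = mat p p (\<lambda>(r, c). M $$ (i * p + r, j * p + c))"

definition block_invertible :: "nat \<Rightarrow> 'a::semiring_1 mat \<Rightarrow> bool" where
  "block_invertible p M \<longleftrightarrow> p dvd dim_row M \<and> p dvd dim_col M \<and>
     (\<forall>i < dim_row M div p. \<forall>j < dim_col M div p. invertible_mat (block M p i j))"

definition block_invertible_square :: "nat \<Rightarrow> nat \<Rightarrow> 'a::semiring_1 mat \<Rightarrow> bool" where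
  "block_invertible_square n p M \<longleftrightarrow> M \<in> carrier_mat n n \<and> block_invertible p M \<and> invertible_mat M"

end

(* Pick a p x p matrix E having neither 0 nor 1 as an eigenvalue, and let M be the block matrix
   with E on and below the block diagonal and the identity above it, so every block is invertible.
   If M v = 0, subtracting consecutive block rows gives (E - 1) x_i = 0 for every block x_i of v
   except the first; hence these vanish, and the first block row then reduces to E x_0 = 0. *)

theory Submission
  imports Defs "Jordan_Normal_Form.Determinant"
begin

lemma invertible_mat_if_trivial_kernel:
  fixes A :: "'a::field mat"
  assumes A: "A \<in> carrier_mat n n"
    and kernel: "\<And>v. v \<in> carrier_vec n \<Longrightarrow> A *\<^sub>v v = 0\<^sub>v n \<Longrightarrow> v = 0\<^sub>v n"
  shows "invertible_mat A"
proof -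
  have "det A \<noteq> 0"
    using det_0_iff_vec_prod_zero_field[OF A] kernel by blast
  from det_non_zero_imp_unit[OF A this]
  obtain B where "B \<in> carrier_mat n n" "A * B = 1\<^sub>m n" "B * A = 1\<^sub>m n"
    unfolding Units_def ring_mat_def by auto
  with A show ?thesis
    unfolding invertible_mat_def inverts_mat_def by auto
qed

lemma invertible_one_mat: "invertible_mat (1\<^sub>m n :: 'a::semiring_1 mat)"
  unfolding invertible_mat_def inverts_mat_def by (auto intro!: exI[of _ "1\<^sub>m n"])

text \<open>An eigenvector for \<lambda> has
  coordinates \<lambda>^r v0 with \<lambda>^p + \<lambda>^(p-1) = 1, so neither 0 nor 1 is an eigenvalue,
  over every field.\<close>
definition shift_mat :: "nat \<Rightarrow> 'a::ring_1 mat" where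
  "shift_mat p = mat p p (\<lambda>(r, c).
     if Suc r < p then of_bool (c = Suc r) else of_bool (c = 0) - of_bool (c = p - 1))"

lemma shift_mat_carrier [simp]: "shift_mat p \<in> carrier_mat p p"
  by (simp add: shift_mat_def)

lemma shift_mat_mult_vec_index:
  fixes v :: "'a::ring_1 vec"
  assumes "p > 1" and "v \<in> carrier_vec p" and "r < p"
  shows "(shift_mat p *\<^sub>v v) $ r = (if Suc r < p then v $ Suc r else v $ 0 - v $ (p - 1))"
  using assms
  by (auto simp: shift_mat_def scalar_prod_def left_diff_distrib sum_subtractf of_bool_def
      if_distrib[of "\<lambda>x. x * _"] cong: if_cong)

lemma shift_mat_kernel:
  fixes v :: "'a::ring_1 vec"
  assumes p: "p > 1" and v: "v \<in> carrier_vec p" and zero: "shift_mat p *\<^sub>v v = 0\<^sub>v p"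
  shows "v = 0\<^sub>v p"
proof -
  have coord: "(shift_mat p *\<^sub>v v) $ r = 0" if "r < p" for r
    using zero that by simp
  have succ: "v $ Suc r = 0" if "Suc r < p" for r
    using coord[of r] shift_mat_mult_vec_index[OF p v, of r] that by simp
  have "v $ (p - 1) = 0"
    using succ[of "p - 2"] p by (simp add: Suc_diff_Suc numeral_2_eq_2)
  moreover have "v $ 0 - v $ (p - 1) = 0"
    using coord[of "p - 1"] shift_mat_mult_vec_index[OF p v, of "p - 1"] p by simp
  ultimately have "v $ 0 = 0" by simp
  with succ v show ?thesis
    by (intro eq_vecI) (auto, metis not0_implies_Suc)
qed

lemma shift_mat_no_fixed_vector:
  fixes v :: "'a::ring_1 vec"
  assumes p: "p > 1" and v: "v \<in> carrier_vec p" and fixed: "shift_mat p *\<^sub>v v = v"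
  shows "v = 0\<^sub>v p"
proof -
  have coord: "(shift_mat p *\<^sub>v v) $ r = v $ r" for r
    using fixed by simp
  have succ: "v $ Suc r = v $ r" if "Suc r < p" for r
    using coord[of r] shift_mat_mult_vec_index[OF p v, of r] that by simp
  have const: "v $ r = v $ 0" if "r < p" for r
    using that by (induction r) (auto simp: succ)
  have "v $ 0 - v $ (p - 1) = v $ (p - 1)"
    using coord[of "p - 1"] shift_mat_mult_vec_index[OF p v, of "p - 1"] p by simp
  then have "v $ 0 = 0"
    using const[of "p - 1"] p by simp
  with const v show ?thesis
    by (intro eq_vecI) auto
qed

definition vec_block :: "'a vec \<Rightarrow> nat \<Rightarrow> nat \<Rightarrow> 'a vec" where
  "vec_block v p j = vec p (\<lambda>c. v $ (j * p + c))"

lemma dim_vec_block [simp]: "dim_vec (vec_block v p j) = p"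
  by (simp add: vec_block_def)

lemma index_vec_block [simp]: "c < p \<Longrightarrow> vec_block v p j $ c = v $ (j * p + c)"
  by (simp add: vec_block_def)

definition staircase_block_mat :: "nat \<Rightarrow> nat \<Rightarrow> 'a::semiring_1 mat \<Rightarrow> 'a mat" where
  "staircase_block_mat k p A = mat (k * p) (k * p) (\<lambda>(a, b).
     if b div p \<le> a div p then A $$ (a mod p, b mod p) else 1\<^sub>m p $$ (a mod p, b mod p))"

lemma dim_staircase_block_mat [simp]:
  "dim_row (staircase_block_mat k p A) = k * p"
  "dim_col (staircase_block_mat k p A) = k * p"
  by (simp_all add: staircase_block_mat_def)

lemma block_offset_less:
  fixes i k p r :: nat
  assumes "i < k" and "r < p"
  shows "i * p + r < k * p"
proof -
  have "i * p + r < Suc i * p" using assms(2) by simp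
  also have "\<dots> \<le> k * p" using assms(1) by (intro mult_right_mono) auto
  finally show ?thesis .
qed

lemma index_staircase_block_mat:
  assumes "i < k" "j < k" "r < p" "c < p"
  shows "staircase_block_mat k p A $$ (i * p + r, j * p + c) = (if j \<le> i then A else 1\<^sub>m p) $$ (r, c)"
  using assms by (simp add: staircase_block_mat_def block_offset_less)

lemma block_staircase_block_mat:
  assumes "A \<in> carrier_mat p p" and "i < k" and "j < k"
  shows "block (staircase_block_mat k p A) p i j = (if j \<le> i then A else 1\<^sub>m p)"
  using assms by (intro eq_matI) (auto simp: block_def index_staircase_block_mat)

lemma sum_lessThan_mult_blocks:
  "(\<Sum>b<k * p. f b) = (\<Sum>j<k. \<Sum>c<p. f (j * p + c :: nat))"
proof -
  have "sum f {j * p..<j * p + p} = (\<Sum>c<p. f (j * p + c))" for j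
    using sum.shift_bounds_nat_ivl[of f 0 "j * p" p] by (simp add: atLeast0LessThan add.commute)
  then show ?thesis by (simp flip: sum.nat_group)
qed

lemma staircase_block_mat_mult_vec_index:
  assumes "A \<in> carrier_mat p p" and "v \<in> carrier_vec (k * p)" and "i < k" and "r < p"
  shows "(staircase_block_mat k p A *\<^sub>v v) $ (i * p + r)
    = (\<Sum>j<k. ((if j \<le> i then A else 1\<^sub>m p) *\<^sub>v vec_block v p j) $ r)"
proof -
  let ?M = "staircase_block_mat k p A"
  have "(?M *\<^sub>v v) $ (i * p + r) = (\<Sum>b<k * p. ?M $$ (i * p + r, b) * v $ b)"
    using assms by (simp add: block_offset_less scalar_prod_def atLeast0LessThan)
  also have "\<dots> = (\<Sum>j<k. \<Sum>c<p. ?M $$ (i * p + r, j * p + c) * v $ (j * p + c))"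
    by (rule sum_lessThan_mult_blocks)
  also have "\<dots> = (\<Sum>j<k. ((if j \<le> i then A else 1\<^sub>m p) *\<^sub>v vec_block v p j) $ r)"
    using assms
    by (intro sum.cong refl) (simp add: index_staircase_block_mat vec_block_def scalar_prod_def atLeast0LessThan)
  finally show ?thesis .
qed

lemma staircase_block_mat_mult_vec_row_diff:
  fixes A :: "'a::ring_1 mat"
  assumes A: "A \<in> carrier_mat p p" and v: "v \<in> carrier_vec (k * p)"
    and i: "0 < i" "i < k" and r: "r < p"
  shows "(staircase_block_mat k p A *\<^sub>v v) $ (i * p + r)
      - (staircase_block_mat k p A *\<^sub>v v) $ ((i - 1) * p + r)
    = (A *\<^sub>v vec_block v p i) $ r - vec_block v p i $ r"
proof -
  let ?x = "vec_block v p"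
  have "((if j \<le> i then A else 1\<^sub>m p) *\<^sub>v ?x j) $ r - ((if j \<le> i - 1 then A else 1\<^sub>m p) *\<^sub>v ?x j) $ r
      = (if j = i then (A *\<^sub>v ?x i) $ r - ?x i $ r else 0)" for j
  proof -
    have "j \<le> i - 1 \<longleftrightarrow> j < i" using i by linarith
    then show ?thesis by (cases "j < i"; cases "j = i") (simp_all add: carrier_vecI)
  qed
  then show ?thesis
    using i A v r
    by (simp add: staircase_block_mat_mult_vec_index sum_subtractf[symmetric])
qed

lemma staircase_block_mat_mult_vec_first_row:
  fixes A :: "'a::semiring_1 mat"
  assumes A: "A \<in> carrier_mat p p" and v: "v \<in> carrier_vec (k * p)"
    and k: "0 < k" and r: "r < p"
  shows "(staircase_block_mat k p A *\<^sub>v v) $ r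
    = (A *\<^sub>v vec_block v p 0) $ r + (\<Sum>j = 1..<k. vec_block v p j $ r)"
proof -
  let ?x = "vec_block v p"
  have "(staircase_block_mat k p A *\<^sub>v v) $ r
      = (\<Sum>j = 0..<k. ((if j \<le> 0 then A else 1\<^sub>m p) *\<^sub>v ?x j) $ r)"
    using staircase_block_mat_mult_vec_index[OF A v k r] by (simp add: atLeast0LessThan)
  also have "\<dots> = (A *\<^sub>v ?x 0) $ r + (\<Sum>j = 1..<k. ((if j \<le> 0 then A else 1\<^sub>m p) *\<^sub>v ?x j) $ r)"
    using k by (simp add: sum.atLeast_Suc_lessThan)
  also have "(\<Sum>j = 1..<k. ((if j \<le> 0 then A else 1\<^sub>m p) *\<^sub>v ?x j) $ r) = (\<Sum>j = 1..<k. ?x j $ r)"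
    by (intro sum.cong refl) (simp add: carrier_vecI)
  finally show ?thesis .
qed

lemma staircase_block_mat_kernel:
  fixes A :: "'a::ring_1 mat"
  assumes A: "A \<in> carrier_mat p p"
    and A_kernel: "\<And>u. u \<in> carrier_vec p \<Longrightarrow> A *\<^sub>v u = 0\<^sub>v p \<Longrightarrow> u = 0\<^sub>v p"
    and A_fixed: "\<And>u. u \<in> carrier_vec p \<Longrightarrow> A *\<^sub>v u = u \<Longrightarrow> u = 0\<^sub>v p"
    and v: "v \<in> carrier_vec (k * p)"
    and zero: "staircase_block_mat k p A *\<^sub>v v = 0\<^sub>v (k * p)"
  shows "v = 0\<^sub>v (k * p)"
proof -
  let ?x = "vec_block v p"
  have row_zero: "(staircase_block_mat k p A *\<^sub>v v) $ (i * p + r) = 0" if "i < k" "r < p" for i r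
    using zero block_offset_less[OF that] by simp
  have later_blocks: "?x i = 0\<^sub>v p" if "0 < i" "i < k" for i
  proof (rule A_fixed, rule carrier_vecI, simp, rule eq_vecI)
    fix r assume "r < dim_vec (?x i)"
    then have r: "r < p" by simp
    then show "(A *\<^sub>v ?x i) $ r = ?x i $ r"
      using staircase_block_mat_mult_vec_row_diff[OF A v that r] row_zero[OF \<open>i < k\<close> r]
        row_zero[of "i - 1" r] that by simp
  qed (use A in simp)
  moreover have first_block: "?x 0 = 0\<^sub>v p" if "0 < k"
  proof (rule A_kernel, rule carrier_vecI, simp, rule eq_vecI)
    fix r assume "r < dim_vec (0\<^sub>v p :: 'a vec)"
    then have r: "r < p" by simp
    then show "(A *\<^sub>v ?x 0) $ r = 0\<^sub>v p $ r"
      using staircase_block_mat_mult_vec_first_row[OF A v that r] row_zero[OF that r]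
        later_blocks by simp
  qed (use A in simp)
  ultimately have blocks: "?x j = 0\<^sub>v p" if "j < k" for j
    using that by (cases "j = 0") auto
  show ?thesis
  proof (rule eq_vecI)
    fix b assume "b < dim_vec (0\<^sub>v (k * p) :: 'a vec)"
    then have b: "b < k * p" by simp
    then have p: "0 < p" by (cases p) auto
    have "b div p < k" using b by (simp add: less_mult_imp_div_less)
    then have "?x (b div p) $ (b mod p) = 0"
      using blocks p by simp
    then show "v $ b = 0\<^sub>v (k * p) $ b"
      using b p by (simp add: mult.commute)
  qed (use v in simp)
qed

lemma invertible_staircase_block_mat:
  fixes A :: "'a::field mat"
  assumes "A \<in> carrier_mat p p"
    and "\<And>u. u \<in> carrier_vec p \<Longrightarrow> A *\<^sub>v u = 0\<^sub>v p \<Longrightarrow> u = 0\<^sub>v p"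
    and "\<And>u. u \<in> carrier_vec p \<Longrightarrow> A *\<^sub>v u = u \<Longrightarrow> u = 0\<^sub>v p"
  shows "invertible_mat (staircase_block_mat k p A)"
proof (rule invertible_mat_if_trivial_kernel)
  show "staircase_block_mat k p A \<in> carrier_mat (k * p) (k * p)"
    by (simp add: carrier_matI)
qed (rule staircase_block_mat_kernel[OF assms])

theorem mainTheorem2:
  fixes n p :: nat
  assumes "p > 1" and "n \<ge> p" and "p dvd n"
  shows "\<exists>M :: 'a::field mat. block_invertible_square n p M"
proof -
  define k where "k = n div p"
  define M :: "'a mat" where "M = staircase_block_mat k p (shift_mat p)"
  note E_kernel = shift_mat_kernel[OF \<open>p > 1\<close>]
    and E_fixed = shift_mat_no_fixed_vector[OF \<open>p > 1\<close>]
  have n: "k * p = n"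
    using \<open>p dvd n\<close> by (simp add: k_def)
  have "invertible_mat (shift_mat p :: 'a mat)"
    by (rule invertible_mat_if_trivial_kernel[OF shift_mat_carrier E_kernel])
  then have "block_invertible p M"
    using n \<open>p dvd n\<close>
    by (simp add: block_invertible_def M_def block_staircase_block_mat[OF shift_mat_carrier]
        invertible_one_mat flip: k_def)
  moreover have "invertible_mat M"
    unfolding M_def by (rule invertible_staircase_block_mat[OF shift_mat_carrier E_kernel E_fixed])
  moreover have "M \<in> carrier_mat n n"
    using n by (simp add: M_def carrier_matI)
  ultimately show ?thesis
    unfolding block_invertible_square_def by blast
qed

end
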